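(* Let $\Pi=\{\Pi_\phi\}$ be a partition of a finite set of paths $\mathcal{P}$ into pairwise disjoint cells, and let $\Phi$ be a finite well-behaved set of filling classes $\phi=(Z_\phi,\Pi_\phi)$, partially ordered by $\ge_\xi$. Let $Z_\Phi=\bigcup_{\phi\in\Phi}Z_\phi$, where each PGT $\gamma$ has duration $E_\gamma>0$, minimum separation $t^{\mathrm{minsep}}_\gamma\ge0$ and positive integer minimal allocation $\mathcal{M}_\gamma$. Let $\Omega$ be the set of all totally ordered subsets (chains) of $(\Phi,\ge_\xi)$. Then for every $t_0$ there exists a valid schedule containing exactly $\mathcal{M}_\gamma$ PGAs of every $\gamma\in Z_\Phi$, all of whose PGAs lie within $[t_0,\,t_0+\mathcal{R}(Z_\Phi)]$, where $$\mathcal{R}(Z_\Phi)=\max_{\Theta\in\Omega}\ \sum_{\theta\in\Theta}R(Z_\theta).$$ In particular $\mathcal{R}(Z_\Phi)$ upper-bounds the minimum time needed to execute such a valid schedule.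
   Context: Let $\mathcal{R}$ be the set of vertices on paths of $\mathcal{P}$; for $Q\subseteq\mathcal{P}$, $\xi(Q)=\{r\in\mathcal{R}:\exists\pi\in Q,\ r\in\pi\}$, and $\xi(\pi)$ denotes the vertex set of a single path. Order: $\phi>_\xi\psi$ iff $\xi(\Pi_\psi)\subsetneq\xi(\Pi_\phi)$. $\Phi=\{\phi_i\}$ is well-behaved if (1) $\xi(\Pi_{\phi_i})\ne\xi(\Pi_{\phi_j})$ for $i\ne j$, and (2) for $i\ne j$, $\xi(\Pi_{\phi_i})\cap\xi(\Pi_{\phi_j})\ne\emptyset$ implies one of $\xi(\Pi_{\phi_i}),\xi(\Pi_{\phi_j})$ is a proper subset of the other. Each $Z_\phi$ is a set of PGTs with $\pi_\gamma\in\Pi_\phi$. For $Z_\phi=\{\gamma_0,\dots,\gamma_{M-1}\}$ indexed with $\mathcal{M}_{\gamma_0}\le\dots\le\mathcal{M}_{\gamma_{M-1}}$, $E_x=E_{\gamma_x}$, $\tau_x=t^{\mathrm{minsep}}_{\gamma_x}$: $n_0=\mathcal{M}_{\gamma_0}-1$, $n_x=\mathcal{M}_{\gamma_x}-\mathcal{M}_{\gamma_{x-1}}$, $c_x=\max(\max_{y\ge x}(E_y+\tau_y),\sum_{y=x}^{M-1}E_y)$, $R(Z_\phi)=\sum_x(n_xc_x+E_x)$, $R(\emptyset)=0$. A PGA of $\gamma$ is an interval $[s,s+E_\gamma)$ assigned to $\gamma$; a schedule is a finite set of PGAs. A resource conflict: distinct PGAs $[s,e)$ of $\gamma$ and $[s',e')$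 of $\gamma'$ with $\xi(\pi_\gamma)\cap\xi(\pi_{\gamma'})\ne\emptyset$ and $s\le s'<e$. A minsep violation: time-consecutive PGAs $[s,e)$, $[s'',e'')$ of the same $\gamma$ with $s''-e<t^{\mathrm{minsep}}_\gamma$. A schedule is valid if it has neither. *)

theory Defs
  imports Complex_Main "HOL-Library.Disjoint_Sets"
begin

definition xi :: "('p \<Rightarrow> 'v set) \<Rightarrow> 'p set \<Rightarrow> 'v set" where
  "xi verts Q = (\<Union>\<pi>\<in>Q. verts \<pi>)"

definition xi_gt :: "('p \<Rightarrow> 'v set) \<Rightarrow> ('c \<Rightarrow> 'p set) \<Rightarrow> 'c \<Rightarrow> 'c \<Rightarrow> bool" where
  "xi_gt verts cell \<phi> \<psi> \<longleftrightarrow> xi verts (cell \<psi>) \<subset> xi verts (cell \<phi>)"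

definition xi_ge :: "('p \<Rightarrow> 'v set) \<Rightarrow> ('c \<Rightarrow> 'p set) \<Rightarrow> 'c \<Rightarrow> 'c \<Rightarrow> bool" where
  "xi_ge verts cell \<phi> \<psi> \<longleftrightarrow> xi_gt verts cell \<phi> \<psi> \<or> \<phi> = \<psi>"

definition well_behaved :: "('p \<Rightarrow> 'v set) \<Rightarrow> ('c \<Rightarrow> 'p set) \<Rightarrow> 'c set \<Rightarrow> bool" where
  "well_behaved verts cell \<Phi> \<longleftrightarrow>
     (\<forall>\<phi>\<in>\<Phi>. \<forall>\<psi>\<in>\<Phi>. \<phi> \<noteq> \<psi> \<longrightarrow> xi verts (cell \<phi>) \<noteq> xi verts (cell \<psi>)) \<and>
     (\<forall>\<phi>\<in>\<Phi>. \<forall>\<psi>\<in>\<Phi>. \<phi> \<noteq> \<psi> \<longrightarrow> xi verts (cell \<phi>) \<inter> xi verts (cell \<psi>) \<noteq> {} \<longrightarrow>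
        xi verts (cell \<phi>) \<subset> xi verts (cell \<psi>) \<or> xi verts (cell \<psi>) \<subset> xi verts (cell \<phi>))"

definition xi_chain :: "('p \<Rightarrow> 'v set) \<Rightarrow> ('c \<Rightarrow> 'p set) \<Rightarrow> 'c set \<Rightarrow> 'c set \<Rightarrow> bool" where
  "xi_chain verts cell \<Phi> \<Theta> \<longleftrightarrow> \<Theta> \<subseteq> \<Phi> \<and>
     (\<forall>a\<in>\<Theta>. \<forall>b\<in>\<Theta>. xi_ge verts cell a b \<or> xi_ge verts cell b a)"

text \<open>R of a list [g_0,...,g_{M-1}] of PGTs sorted by minimal allocation.\<close>
definition R_list :: "('g \<Rightarrow> real) \<Rightarrow> ('g \<Rightarrow> real) \<Rightarrow> ('g \<Rightarrow> nat) \<Rightarrow> 'g list \<Rightarrow> real" where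
  "R_list E tau M gs =
     (let L = length gs;
          n = (\<lambda>x. if x = 0 then real (M (gs ! 0)) - 1
                   else real (M (gs ! x)) - real (M (gs ! (x - 1))));
          c = (\<lambda>x. max (Max ((\<lambda>y. E (gs ! y) + tau (gs ! y)) ` {x..<L}))
                        (\<Sum>y=x..<L. E (gs ! y)))
      in (\<Sum>x<L. n x * c x + E (gs ! x)))"

text \<open>R(Z) for a finite set Z of PGTs: evaluate R_list on an enumeration of Z
  sorted by nondecreasing minimal allocation (value independent of tie order).
  R of the empty set is 0.\<close>
definition R_set :: "('g \<Rightarrow> real) \<Rightarrow> ('g \<Rightarrow> real) \<Rightarrow> ('g \<Rightarrow> nat) \<Rightarrow> 'g set \<Rightarrow> real" where
  "R_set E tau M Z = R_list E tau M
     (SOME gs. distinct gs \<and> set gs = Z \<and> sorted (map M gs))"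

text \<open>A PGA is a pair (gamma, s) standing for the interval [s, s + E gamma).
  A schedule is a finite set of PGAs.\<close>
definition resource_conflict ::
  "('p \<Rightarrow> 'v set) \<Rightarrow> ('g \<Rightarrow> 'p) \<Rightarrow> ('g \<Rightarrow> real) \<Rightarrow> ('g \<times> real) set \<Rightarrow> bool" where
  "resource_conflict verts path E S \<longleftrightarrow>
     (\<exists>(g, s)\<in>S. \<exists>(g', s')\<in>S. (g, s) \<noteq> (g', s') \<and>
        verts (path g) \<inter> verts (path g') \<noteq> {} \<and> s \<le> s' \<and> s' < s + E g)"

definition minsep_violation ::
  "('g \<Rightarrow> real) \<Rightarrow> ('g \<Rightarrow> real) \<Rightarrow> ('g \<times> real) set \<Rightarrow> bool" where
  "minsep_violation E tau S \<longleftrightarrow>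
     (\<exists>g s s''. (g, s) \<in> S \<and> (g, s'') \<in> S \<and> s < s'' \<and>
        \<not> (\<exists>s'. (g, s') \<in> S \<and> s < s' \<and> s' < s'') \<and>
        s'' - (s + E g) < tau g)"

definition valid_schedule ::
  "('p \<Rightarrow> 'v set) \<Rightarrow> ('g \<Rightarrow> 'p) \<Rightarrow> ('g \<Rightarrow> real) \<Rightarrow> ('g \<Rightarrow> real) \<Rightarrow> ('g \<times> real) set \<Rightarrow> bool" where
  "valid_schedule verts path E tau S \<longleftrightarrow> finite S \<and>
     \<not> resource_conflict verts path E S \<and> \<not> minsep_violation E tau S"

end

theory Submission
  imports Defs
begin

(* Inside one filling class the PGTs, sorted by minimal allocation, share a single time line.
   While the first PGT gamma_0 still needs more than one allocation, every PGT runs once, back to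
   back, in a round of length c_0; as c_0 dominates both the whole round and each E + t_minsep,
   consecutive allocations of a PGT are far enough apart. Once gamma_0 needs exactly one more
   allocation it runs alone for E_0 and is dropped. Hence R = c_0 + R(M - 1), resp.
   R = E_0 + R(rest), and the class fits into a window of length R(Z_phi).
   Classes whose PGTs share a vertex have intersecting xi-sets and so are comparable under >_xi.
   Starting class phi at the largest total R of a chain strictly above phi places the windows of
   comparable classes one after the other, and each window ends by the total R of that chain
   extended by phi. *)

definition serial_schedule :: "('g \<Rightarrow> real) \<Rightarrow> ('g \<Rightarrow> real) \<Rightarrow> ('g \<times> real) set \<Rightarrow> bool" where
  "serial_schedule E tau S \<longleftrightarrow> finite S \<and>
     (\<forall>g s g' s'. (g, s) \<in> S \<longrightarrow> (g', s') \<in> S \<longrightarrow> (g, s) \<noteq> (g', s') \<longrightarrow>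
        \<not> (s \<le> s' \<and> s' < s + E g)) \<and>
     \<not> minsep_violation E tau S"

lemma serial_schedule_empty: "serial_schedule E tau {}"
  by (simp add: serial_schedule_def minsep_violation_def)

lemma serial_schedule_singleton: "serial_schedule E tau {(g, t)}"
  by (auto simp: serial_schedule_def minsep_violation_def)

lemma not_minsep_violation_Un:
  assumes "\<not> minsep_violation E tau S1" "\<not> minsep_violation E tau S2"
    and before: "\<And>g s g' s'. (g, s) \<in> S1 \<Longrightarrow> (g', s') \<in> S2 \<Longrightarrow> s < s'"
    and gap: "\<And>g s s'. (g, s) \<in> S1 \<Longrightarrow> (g, s') \<in> S2 \<Longrightarrow> tau g \<le> s' - (s + E g)"
  shows "\<not> minsep_violation E tau (S1 \<union> S2)"
proof
  assume "minsep_violation E tau (S1 \<union> S2)"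
  then obtain g s s' where v: "(g, s) \<in> S1 \<union> S2" "(g, s') \<in> S1 \<union> S2" "s < s'"
    "\<not> (\<exists>s''. (g, s'') \<in> S1 \<union> S2 \<and> s < s'' \<and> s'' < s')" "s' - (s + E g) < tau g"
    unfolding minsep_violation_def by blast
  consider "(g, s) \<in> S1" "(g, s') \<in> S1" | "(g, s) \<in> S2" "(g, s') \<in> S2"
    | "(g, s) \<in> S1" "(g, s') \<in> S2" | "(g, s) \<in> S2" "(g, s') \<in> S1"
    using v(1,2) by blast
  then show False
  proof cases
    case 1
    then show False using v(3-5) assms(1) unfolding minsep_violation_def by blast
  next
    case 2
    then show False using v(3-5) assms(2) unfolding minsep_violation_def by blast
  next
    case 3
    then show False using v(5) gap[of g s s'] by linarith
  next
    case 4
    then show False using v(3) before[of g s' g s] by linarith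
  qed
qed

lemma serial_schedule_Un:
  assumes "serial_schedule E tau S1" "serial_schedule E tau S2"
    and before: "\<And>g s g' s'. (g, s) \<in> S1 \<Longrightarrow> (g', s') \<in> S2 \<Longrightarrow> s < s' \<and> s + E g \<le> s'"
    and gap: "\<And>g s s'. (g, s) \<in> S1 \<Longrightarrow> (g, s') \<in> S2 \<Longrightarrow> tau g \<le> s' - (s + E g)"
  shows "serial_schedule E tau (S1 \<union> S2)"
proof -
  have "\<not> (s \<le> s' \<and> s' < s + E g)"
    if mem: "(g, s) \<in> S1 \<union> S2" "(g', s') \<in> S1 \<union> S2" and ne: "(g, s) \<noteq> (g', s')"
    for g s g' s'
  proof -
    consider "(g, s) \<in> S1" "(g', s') \<in> S1" | "(g, s) \<in> S2" "(g', s') \<in> S2"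
      | "(g, s) \<in> S1" "(g', s') \<in> S2" | "(g, s) \<in> S2" "(g', s') \<in> S1"
      using mem by blast
    then show ?thesis
    proof cases
      case 1
      then show ?thesis using ne assms(1) unfolding serial_schedule_def by blast
    next
      case 2
      then show ?thesis using ne assms(2) unfolding serial_schedule_def by blast
    next
      case 3
      then show ?thesis using before[of g s g' s'] by linarith
    next
      case 4
      then show ?thesis using before[of g' s' g s] by linarith
    qed
  qed
  moreover have "\<not> minsep_violation E tau (S1 \<union> S2)"
  proof (rule not_minsep_violation_Un)
    show "\<not> minsep_violation E tau S1" "\<not> minsep_violation E tau S2"
      using assms(1,2) by (simp_all add: serial_schedule_def)
  qed (use before gap in blast)+
  moreover have "finite (S1 \<union> S2)"
    using assms(1,2) by (simp add: serial_schedule_def)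
  ultimately show ?thesis
    unfolding serial_schedule_def by blast
qed

definition prefix_duration :: "('g \<Rightarrow> real) \<Rightarrow> 'g list \<Rightarrow> 'g \<Rightarrow> real" where
  "prefix_duration E gs g = sum_list (map E (takeWhile (\<lambda>x. x \<noteq> g) gs))"

lemma prefix_duration_Cons_self [simp]: "prefix_duration E (g # gs) g = 0"
  by (simp add: prefix_duration_def)

lemma prefix_duration_Cons: "g \<noteq> a \<Longrightarrow> prefix_duration E (a # gs) g = E a + prefix_duration E gs g"
  by (simp add: prefix_duration_def)

lemma prefix_duration_nonneg: "\<forall>x\<in>set gs. 0 \<le> E x \<Longrightarrow> 0 \<le> prefix_duration E gs g"
  unfolding prefix_duration_def by (rule sum_list_nonneg) (auto dest: set_takeWhileD)

lemma prefix_duration_add_le_sum_list: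
  "\<forall>x\<in>set gs. 0 \<le> E x \<Longrightarrow> g \<in> set gs \<Longrightarrow> prefix_duration E gs g + E g \<le> sum_list (map E gs)"
proof (induction gs)
  case (Cons a gs)
  then show ?case
    by (cases "a = g") (auto simp: prefix_duration_Cons intro!: sum_list_nonneg)
qed simp

fun round_schedule :: "('g \<Rightarrow> real) \<Rightarrow> 'g list \<Rightarrow> real \<Rightarrow> ('g \<times> real) set" where
  "round_schedule E [] t = {}"
| "round_schedule E (g # gs) t = insert (g, t) (round_schedule E gs (t + E g))"

lemma mem_round_schedule_iff:
  "distinct gs \<Longrightarrow> (g, s) \<in> round_schedule E gs t \<longleftrightarrow> g \<in> set gs \<and> s = t + prefix_duration E gs g"
proof (induction gs arbitrary: t)
  case (Cons a gs)
  then show ?case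
    by (cases "g = a") (simp_all add: prefix_duration_Cons add.assoc)
qed simp

lemma serial_round_schedule:
  "distinct gs \<Longrightarrow> \<forall>g\<in>set gs. 0 < E g \<Longrightarrow> serial_schedule E tau (round_schedule E gs t)"
proof (induction gs arbitrary: t)
  case Nil
  then show ?case by (simp add: serial_schedule_empty)
next
  case (Cons a gs)
  have "serial_schedule E tau ({(a, t)} \<union> round_schedule E gs (t + E a))"
  proof (rule serial_schedule_Un)
    show "serial_schedule E tau (round_schedule E gs (t + E a))"
      using Cons by simp
    fix g s g' s'
    assume "(g, s) \<in> {(a, t)}" "(g', s') \<in> round_schedule E gs (t + E a)"
    moreover have "0 \<le> prefix_duration E gs g'" and "0 < E a"
      using Cons.prems by (auto intro!: prefix_duration_nonneg)
    ultimately show "s < s' \<and> s + E g \<le> s'"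
      using Cons.prems(1) by (auto simp: mem_round_schedule_iff)
  next
    fix g s s'
    assume "(g, s) \<in> {(a, t)}" "(g, s') \<in> round_schedule E gs (t + E a)"
    then show "tau g \<le> s' - (s + E g)"
      using Cons.prems(1) by (auto simp: mem_round_schedule_iff)
  qed (rule serial_schedule_singleton)
  then show ?case by simp
qed

definition rounds :: "('g \<Rightarrow> nat) \<Rightarrow> 'g list \<Rightarrow> nat \<Rightarrow> real" where
  "rounds M gs x = (if x = 0 then real (M (gs ! 0)) - 1 else real (M (gs ! x)) - real (M (gs ! (x - 1))))"

definition round_length :: "('g \<Rightarrow> real) \<Rightarrow> ('g \<Rightarrow> real) \<Rightarrow> 'g list \<Rightarrow> nat \<Rightarrow> real" where
  "round_length E tau gs x = max (Max ((\<lambda>y. E (gs ! y) + tau (gs ! y)) ` {x..<length gs}))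
                                 (\<Sum>y=x..<length gs. E (gs ! y))"

lemma R_list_eq_sum:
  "R_list E tau M gs = (\<Sum>x<length gs. rounds M gs x * round_length E tau gs x + E (gs ! x))"
  by (simp add: R_list_def Let_def rounds_def round_length_def)

lemma round_length_Cons_Suc: "round_length E tau (g # gs) (Suc x) = round_length E tau gs x"
proof -
  have "(\<lambda>y. E ((g # gs) ! y) + tau ((g # gs) ! y)) ` {Suc x..<Suc (length gs)} =
      (\<lambda>y. E (gs ! y) + tau (gs ! y)) ` {x..<length gs}"
    by (simp add: image_Suc_atLeastLessThan[symmetric] image_image del: image_Suc_atLeastLessThan)
  moreover have "(\<Sum>y=Suc x..<Suc (length gs). E ((g # gs) ! y)) = (\<Sum>y=x..<length gs. E (gs ! y))"
    by (simp only: sum.shift_bounds_Suc_ivl nth_Cons_Suc)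
  ultimately show ?thesis
    by (simp add: round_length_def)
qed

lemma round_length_0_ge:
  assumes "g \<in> set gs"
  shows "E g + tau g \<le> round_length E tau gs 0" and "sum_list (map E gs) \<le> round_length E tau gs 0"
proof -
  have "(\<lambda>y. E (gs ! y) + tau (gs ! y)) ` {0..<length gs} = (\<lambda>g. E g + tau g) ` ((!) gs ` {0..<length gs})"
    by (simp only: image_image)
  also have "\<dots> = (\<lambda>g. E g + tau g) ` set gs"
    by (simp add: nth_image)
  finally have "(\<lambda>y. E (gs ! y) + tau (gs ! y)) ` {0..<length gs} = (\<lambda>g. E g + tau g) ` set gs" .
  moreover have "E g + tau g \<le> (MAX g\<in>set gs. E g + tau g)"
    using assms by (intro Max_ge) auto
  ultimately show "E g + tau g \<le> round_length E tau gs 0"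
    by (simp add: round_length_def)
  show "sum_list (map E gs) \<le> round_length E tau gs 0"
    by (simp add: round_length_def sum_list_sum_nth atLeast0LessThan)
qed

lemma R_list_nonneg:
  assumes "sorted (map M gs)" "\<forall>g\<in>set gs. 1 \<le> M g \<and> 0 \<le> E g"
  shows "0 \<le> R_list E tau M gs"
proof -
  have "0 \<le> rounds M gs x" if "x < length gs" for x
  proof (cases x)
    case 0
    then show ?thesis
      using that assms(2) nth_mem[of 0 gs] by (auto simp: rounds_def)
  next
    case (Suc y)
    then have "M (gs ! y) \<le> M (gs ! x)"
      using that assms(1) by (simp add: sorted_iff_nth_mono)
    then show ?thesis
      using Suc by (simp add: rounds_def)
  qed
  moreover have "0 \<le> round_length E tau gs x" for x
  proof -
    have "0 \<le> (\<Sum>y=x..<length gs. E (gs ! y))"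
      using assms(2) by (intro sum_nonneg) auto
    then show ?thesis
      by (simp add: round_length_def)
  qed
  ultimately show ?thesis
    using assms(2) by (auto simp: R_list_eq_sum intro!: sum_nonneg)
qed

lemma R_list_Cons_single:
  assumes "M g = 1"
  shows "R_list E tau M (g # gs) = E g + R_list E tau M gs"
proof -
  have "rounds M (g # gs) (Suc x) = rounds M gs x" for x
    using assms by (cases x) (auto simp: rounds_def)
  moreover have "rounds M (g # gs) 0 = 0"
    using assms by (simp add: rounds_def)
  ultimately show ?thesis
    unfolding R_list_eq_sum length_Cons sum.lessThan_Suc_shift
    by (simp add: round_length_Cons_Suc)
qed

lemma R_list_eq_round_length_add:
  assumes "gs \<noteq> []" "\<forall>g\<in>set gs. M g = Suc (M' g)"
  shows "R_list E tau M gs = round_length E tau gs 0 + R_list E tau M' gs"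
proof -
  let ?c = "round_length E tau gs"
  have "rounds M gs x * ?c x + E (gs ! x) =
      (rounds M' gs x * ?c x + E (gs ! x)) + (if x = 0 then ?c x else 0)"
    if "x < length gs" for x
  proof -
    have "gs ! x \<in> set gs" "x \<noteq> 0 \<Longrightarrow> gs ! (x - 1) \<in> set gs"
      using that by auto
    then show ?thesis
      using assms(2) by (auto simp: rounds_def algebra_simps)
  qed
  then have "R_list E tau M gs =
      (\<Sum>x<length gs. (rounds M' gs x * ?c x + E (gs ! x)) + (if x = 0 then ?c x else 0))"
    unfolding R_list_eq_sum by (intro sum.cong) simp_all
  also have "\<dots> = R_list E tau M' gs + ?c 0"
    using assms(1) by (simp add: sum.distrib R_list_eq_sum)
  finally show ?thesis
    by simp
qed

text \<open>The lower bound \<open>t + prefix_duration E gs g\<close> is what lets a further round be placed in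
  front of such a schedule without violating a minimum separation.\<close>

definition staggered_schedule ::
  "('g \<Rightarrow> real) \<Rightarrow> ('g \<Rightarrow> real) \<Rightarrow> ('g \<Rightarrow> nat) \<Rightarrow> 'g list \<Rightarrow> real \<Rightarrow> real \<Rightarrow> ('g \<times> real) set \<Rightarrow> bool"
where
  "staggered_schedule E tau M gs t T S \<longleftrightarrow> serial_schedule E tau S \<and> S \<subseteq> set gs \<times> UNIV \<and>
     (\<forall>g\<in>set gs. card {s. (g, s) \<in> S} = M g) \<and>
     (\<forall>(g, s)\<in>S. t + prefix_duration E gs g \<le> s \<and> s + E g \<le> T)"

lemma staggered_schedule_Nil: "staggered_schedule E tau M [] t T {}"
  by (simp add: staggered_schedule_def serial_schedule_empty)

lemma staggered_schedule_insert:
  assumes "M g = 1" "g \<notin> set gs" "0 < E g" "\<forall>x\<in>set gs. 0 \<le> E x" "t + E g \<le> T"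
    and S: "staggered_schedule E tau M gs (t + E g) T S"
  shows "staggered_schedule E tau M (g # gs) t T (insert (g, t) S)"
proof -
  have S_gs: "S \<subseteq> set gs \<times> UNIV"
    using S by (simp add: staggered_schedule_def)
  have S_bounds: "t + E g + prefix_duration E gs x \<le> s \<and> s + E x \<le> T" if "(x, s) \<in> S" for x s
    using S that by (auto simp: staggered_schedule_def)
  have "serial_schedule E tau ({(g, t)} \<union> S)"
  proof (rule serial_schedule_Un)
    show "serial_schedule E tau S"
      using S by (simp add: staggered_schedule_def)
    fix x s x' s'
    assume "(x, s) \<in> {(g, t)}" "(x', s') \<in> S"
    moreover have "0 \<le> prefix_duration E gs x'"
      using assms(4) by (rule prefix_duration_nonneg)
    ultimately show "s < s' \<and> s + E x \<le> s'"
      using S_bounds[of x' s'] assms(3) by auto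
  next
    fix x s s'
    assume "(x, s) \<in> {(g, t)}" "(x, s') \<in> S"
    then show "tau x \<le> s' - (s + E x)"
      using S_gs assms(2) by auto
  qed (rule serial_schedule_singleton)
  moreover have "card {s. (x, s) \<in> insert (g, t) S} = M x" if "x \<in> set (g # gs)" for x
  proof (cases "x = g")
    case True
    then have "{s. (x, s) \<in> insert (g, t) S} = {t}"
      using S_gs assms(2) by auto
    then show ?thesis
      using True assms(1) by simp
  next
    case False
    then have "{s. (x, s) \<in> insert (g, t) S} = {s. (x, s) \<in> S}"
      by auto
    then show ?thesis
      using False that S by (simp add: staggered_schedule_def)
  qed
  moreover have "t + prefix_duration E (g # gs) x \<le> s \<and> s + E x \<le> T" if "(x, s) \<in> S" for x s
  proof -
    have "x \<noteq> g"
      using that S_gs assms(2) by auto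
    then show ?thesis
      using S_bounds[OF that] by (simp add: prefix_duration_Cons)
  qed
  ultimately show ?thesis
    using S_gs assms(5) by (auto simp: staggered_schedule_def)
qed

lemma staggered_schedule_round_Un:
  assumes "distinct gs" "\<forall>g\<in>set gs. 0 < E g \<and> 0 \<le> tau g \<and> M g = Suc (M' g)"
    and c: "\<forall>g\<in>set gs. E g + tau g \<le> c" "sum_list (map E gs) \<le> c" and "t + c \<le> T"
    and S: "staggered_schedule E tau M' gs (t + c) T S"
  shows "staggered_schedule E tau M gs t T (round_schedule E gs t \<union> S)"
proof -
  have S_gs: "S \<subseteq> set gs \<times> UNIV"
    using S by (simp add: staggered_schedule_def)
  have S_bounds: "t + c + prefix_duration E gs x \<le> s \<and> s + E x \<le> T" if "(x, s) \<in> S" for x s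
    using S that by (auto simp: staggered_schedule_def)
  have P_nonneg: "0 \<le> prefix_duration E gs x" for x
    using assms(2) by (intro prefix_duration_nonneg) (auto intro: less_imp_le)
  have round: "(x, s) \<in> round_schedule E gs t \<longleftrightarrow> x \<in> set gs \<and> s = t + prefix_duration E gs x" for x s
    using assms(1) by (rule mem_round_schedule_iff)
  have round_end: "s + E x \<le> t + c" if "(x, s) \<in> round_schedule E gs t" for x s
    using that round prefix_duration_add_le_sum_list[of gs E x] assms(2) c(2) by fastforce
  have "serial_schedule E tau (round_schedule E gs t \<union> S)"
  proof (rule serial_schedule_Un)
    show "serial_schedule E tau (round_schedule E gs t)"
      using assms(1,2) by (simp add: serial_round_schedule)
    show "serial_schedule E tau S"
      using S by (simp add: staggered_schedule_def)
    fix x s x' s'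
    assume "(x, s) \<in> round_schedule E gs t" "(x', s') \<in> S"
    then show "s < s' \<and> s + E x \<le> s'"
      using round_end S_bounds[of x' s'] P_nonneg[of x'] round assms(2) by force
  next
    fix x s s'
    assume "(x, s) \<in> round_schedule E gs t" "(x, s') \<in> S"
    then show "tau x \<le> s' - (s + E x)"
      using S_bounds[of x s'] round c(1) by force
  qed
  moreover have "card {s. (x, s) \<in> round_schedule E gs t \<union> S} = M x" if "x \<in> set gs" for x
  proof -
    have "{s. (x, s) \<in> round_schedule E gs t \<union> S} = insert (t + prefix_duration E gs x) {s. (x, s) \<in> S}"
      using that round by auto
    moreover have "t + prefix_duration E gs x \<notin> {s. (x, s) \<in> S}"
      using S_bounds that c(1) assms(2) by force
    moreover have "finite {s. (x, s) \<in> S}"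
      using S finite_Image[of S "{x}"] by (simp add: staggered_schedule_def serial_schedule_def Image_singleton)
    ultimately show ?thesis
      using S that assms(2) by (simp add: staggered_schedule_def)
  qed
  moreover have "t + prefix_duration E gs x \<le> s \<and> s + E x \<le> T" if "(x, s) \<in> round_schedule E gs t \<union> S" for x s
    using that round round_end S_bounds S_gs c(1) assms(2,5) by force
  ultimately show ?thesis
    using S_gs round by (auto simp: staggered_schedule_def)
qed

lemma staggered_schedule_round_step:
  assumes "distinct gs" "gs \<noteq> []" "sorted (map M' gs)"
    and pos: "\<forall>g\<in>set gs. 0 < E g \<and> 0 \<le> tau g \<and> 1 \<le> M' g \<and> M g = Suc (M' g)"
    and S: "staggered_schedule E tau M' gs (t + round_length E tau gs 0)
              (t + round_length E tau gs 0 + R_list E tau M' gs) S"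
  shows "staggered_schedule E tau M gs t (t + R_list E tau M gs) (round_schedule E gs t \<union> S)"
proof -
  have "0 \<le> R_list E tau M' gs"
    using assms(3) pos by (intro R_list_nonneg) (auto intro: less_imp_le)
  moreover have "\<forall>x\<in>set gs. E x + tau x \<le> round_length E tau gs 0"
    by (auto intro: round_length_0_ge)
  moreover have "sum_list (map E gs) \<le> round_length E tau gs 0"
    using assms(2) by (intro round_length_0_ge(2)[of "hd gs"]) simp
  ultimately have "staggered_schedule E tau M gs t
      (t + round_length E tau gs 0 + R_list E tau M' gs) (round_schedule E gs t \<union> S)"
    using staggered_schedule_round_Un[OF assms(1) _ _ _ _ S] pos by simp
  moreover have "R_list E tau M gs = round_length E tau gs 0 + R_list E tau M' gs"
    using R_list_eq_round_length_add assms(2) pos by blast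
  ultimately show ?thesis
    by (simp add: add.assoc)
qed

lemma staggered_schedule_exists:
  assumes "distinct gs" "sorted (map M gs)" "\<forall>g\<in>set gs. 0 < E g \<and> 0 \<le> tau g \<and> 1 \<le> M g"
  shows "\<exists>S. staggered_schedule E tau M gs t (t + R_list E tau M gs) S"
  using assms
proof (induction "sum_list (map M gs)" arbitrary: gs M t rule: less_induct)
  case less
  show ?case
  proof (cases gs)
    case Nil
    then show ?thesis
      using staggered_schedule_Nil by blast
  next
    case (Cons g rest)
    have E_nonneg: "\<forall>x\<in>set gs. 0 \<le> E x" and M_ge: "\<forall>x\<in>set rest. M g \<le> M x"
      using less.prems Cons by (auto intro: less_imp_le)
    show ?thesis
    proof (cases "M g = 1")
      case True
      have "sum_list (map M rest) < sum_list (map M gs)"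
        using Cons True by simp
      then obtain S where "staggered_schedule E tau M rest (t + E g) (t + E g + R_list E tau M rest) S"
        using less.hyps less.prems Cons by fastforce
      moreover have "0 \<le> R_list E tau M rest"
        using less.prems Cons by (intro R_list_nonneg) (auto intro: less_imp_le)
      ultimately have "staggered_schedule E tau M gs t (t + R_list E tau M gs) (insert (g, t) S)"
        using staggered_schedule_insert[of M g rest E t] True Cons less.prems E_nonneg
        by (simp add: R_list_Cons_single add.assoc)
      then show ?thesis ..
    next
      case False
      define M' where "M' x = M x - 1" for x
      have M_Suc: "\<forall>x\<in>set gs. M x = Suc (M' x)"
        using less.prems(3) by (auto simp: M'_def)
      have M'_pos: "\<forall>x\<in>set gs. 1 \<le> M' x"
        using False M_ge less.prems(3) Cons by (fastforce simp: M'_def)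
      have "sum_list (map M gs) = sum_list (map (\<lambda>x. Suc (M' x)) gs)"
        using M_Suc by (intro arg_cong[where f = sum_list] map_cong) auto
      then have "sum_list (map M' gs) < sum_list (map M gs)"
        using Cons by (simp add: sum_list_Suc)
      moreover have "sorted (map M' gs)"
        using less.prems(2) unfolding sorted_map M'_def
        by (rule sorted_wrt_mono_rel[rotated]) auto
      ultimately obtain S where
        S: "staggered_schedule E tau M' gs (t + round_length E tau gs 0)
              (t + round_length E tau gs 0 + R_list E tau M' gs) S"
        using less.hyps less.prems M'_pos by fastforce
      have "\<forall>x\<in>set gs. 0 < E x \<and> 0 \<le> tau x \<and> 1 \<le> M' x \<and> M x = Suc (M' x)"
        using less.prems(3) M_Suc M'_pos by auto
      then show ?thesis
        using staggered_schedule_round_step[OF less.prems(1) _ \<open>sorted (map M' gs)\<close> _ S] Cons by blast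
    qed
  qed
qed

lemma serial_schedule_R_set:
  assumes "finite Z" "\<forall>g\<in>Z. 0 < E g \<and> 0 \<le> tau g \<and> 1 \<le> M g"
  shows "\<exists>S. serial_schedule E tau S \<and> S \<subseteq> Z \<times> UNIV \<and> (\<forall>g\<in>Z. card {s. (g, s) \<in> S} = M g) \<and>
             (\<forall>(g, s)\<in>S. t \<le> s \<and> s + E g \<le> t + R_set E tau M Z)"
proof -
  define gs where "gs = (SOME gs. distinct gs \<and> set gs = Z \<and> sorted (map M gs))"
  have "\<exists>gs. distinct gs \<and> set gs = Z \<and> sorted (map M gs)"
  proof -
    obtain xs where "distinct xs" "set xs = Z"
      using assms(1) finite_distinct_list by blast
    then show ?thesis
      by (intro exI[of _ "sort_key M xs"]) (simp add: sorted_sort_key)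
  qed
  then have gs: "distinct gs" "set gs = Z" "sorted (map M gs)"
    unfolding gs_def by (metis (mono_tags, lifting) someI_ex)+
  then obtain S where S: "staggered_schedule E tau M gs t (t + R_list E tau M gs) S"
    using staggered_schedule_exists assms(2) by metis
  have "t \<le> s \<and> s + E g \<le> t + R_set E tau M Z" if "(g, s) \<in> S" for g s
  proof -
    have "0 \<le> prefix_duration E gs g"
      using assms(2) gs(2) by (intro prefix_duration_nonneg) (auto intro: less_imp_le)
    moreover have "t + prefix_duration E gs g \<le> s \<and> s + E g \<le> t + R_list E tau M gs"
      using S that unfolding staggered_schedule_def by blast
    ultimately show ?thesis
      by (simp add: R_set_def gs_def)
  qed
  then show ?thesis
    using S gs(2) by (auto simp: staggered_schedule_def)
qed

definition chain_offset :: "('p \<Rightarrow> 'v set) \<Rightarrow> ('c \<Rightarrow> 'p set) \<Rightarrow> 'c set \<Rightarrow> ('c \<Rightarrow> real) \<Rightarrow> 'c \<Rightarrow> real" where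
  "chain_offset verts cell \<Phi> w \<phi> =
     Max {(\<Sum>\<theta>\<in>\<Theta>. w \<theta>) | \<Theta>. xi_chain verts cell \<Phi> \<Theta> \<and> (\<forall>\<theta>\<in>\<Theta>. xi_gt verts cell \<theta> \<phi>)}"

lemma finite_chain_sums:
  "finite \<Phi> \<Longrightarrow> finite {(\<Sum>\<theta>\<in>\<Theta>. w \<theta>) | \<Theta>. xi_chain verts cell \<Phi> \<Theta> \<and> P \<Theta>}"
  by (rule finite_subset[of _ "(\<lambda>\<Theta>. \<Sum>\<theta>\<in>\<Theta>. w \<theta>) ` Pow \<Phi>"]) (auto simp: xi_chain_def)

lemma chain_offset_ge:
  assumes "finite \<Phi>" "xi_chain verts cell \<Phi> \<Theta>" "\<forall>\<theta>\<in>\<Theta>. xi_gt verts cell \<theta> \<phi>"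
  shows "(\<Sum>\<theta>\<in>\<Theta>. w \<theta>) \<le> chain_offset verts cell \<Phi> w \<phi>"
  unfolding chain_offset_def using assms by (intro Max_ge finite_chain_sums) auto

lemma chain_offset_nonneg: "finite \<Phi> \<Longrightarrow> 0 \<le> chain_offset verts cell \<Phi> w \<phi>"
  using chain_offset_ge[of \<Phi> verts cell "{}"] by (simp add: xi_chain_def)

lemma chain_offset_add_attained:
  assumes "finite \<Phi>" "\<phi> \<in> \<Phi>"
  obtains \<Theta> where "xi_chain verts cell \<Phi> (insert \<phi> \<Theta>)" "\<forall>\<theta>\<in>\<Theta>. xi_gt verts cell \<theta> \<phi>"
    and "chain_offset verts cell \<Phi> w \<phi> + w \<phi> = (\<Sum>\<theta>\<in>insert \<phi> \<Theta>. w \<theta>)"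
proof -
  have "chain_offset verts cell \<Phi> w \<phi> \<in>
      {(\<Sum>\<theta>\<in>\<Theta>. w \<theta>) | \<Theta>. xi_chain verts cell \<Phi> \<Theta> \<and> (\<forall>\<theta>\<in>\<Theta>. xi_gt verts cell \<theta> \<phi>)}"
    unfolding chain_offset_def using assms(1)
    by (intro Max_in finite_chain_sums) (auto simp: xi_chain_def intro!: exI[of _ "{}"])
  then obtain \<Theta> where \<Theta>: "xi_chain verts cell \<Phi> \<Theta>" "\<forall>\<theta>\<in>\<Theta>. xi_gt verts cell \<theta> \<phi>"
    and off: "chain_offset verts cell \<Phi> w \<phi> = (\<Sum>\<theta>\<in>\<Theta>. w \<theta>)"
    by blast
  have "\<phi> \<notin> \<Theta>" "finite \<Theta>"
    using \<Theta> assms(1) finite_subset by (auto simp: xi_gt_def xi_chain_def)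
  moreover have "xi_chain verts cell \<Phi> (insert \<phi> \<Theta>)"
    using \<Theta> assms(2) by (auto simp: xi_chain_def xi_ge_def)
  ultimately show ?thesis
    using that \<Theta>(2) off by simp
qed

lemma chain_offset_add_le_Max:
  assumes "finite \<Phi>" "\<phi> \<in> \<Phi>"
  shows "chain_offset verts cell \<Phi> w \<phi> + w \<phi> \<le> Max {(\<Sum>\<theta>\<in>\<Theta>. w \<theta>) | \<Theta>. xi_chain verts cell \<Phi> \<Theta>}"
proof -
  obtain \<Theta> where "xi_chain verts cell \<Phi> (insert \<phi> \<Theta>)"
    and "chain_offset verts cell \<Phi> w \<phi> + w \<phi> = (\<Sum>\<theta>\<in>insert \<phi> \<Theta>. w \<theta>)"
    using chain_offset_add_attained[OF assms] by blast
  then show ?thesis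
    using finite_chain_sums[OF assms(1), where P = "\<lambda>_. True"] by (auto intro!: Max_ge)
qed

lemma chain_offset_add_le:
  assumes "finite \<Phi>" "\<phi> \<in> \<Phi>" "xi_gt verts cell \<phi> \<psi>"
  shows "chain_offset verts cell \<Phi> w \<phi> + w \<phi> \<le> chain_offset verts cell \<Phi> w \<psi>"
proof -
  obtain \<Theta> where "xi_chain verts cell \<Phi> (insert \<phi> \<Theta>)" "\<forall>\<theta>\<in>\<Theta>. xi_gt verts cell \<theta> \<phi>"
    and "chain_offset verts cell \<Phi> w \<phi> + w \<phi> = (\<Sum>\<theta>\<in>insert \<phi> \<Theta>. w \<theta>)"
    using chain_offset_add_attained[OF assms(1,2)] by blast
  moreover have "\<forall>\<theta>\<in>insert \<phi> \<Theta>. xi_gt verts cell \<theta> \<psi>"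
    using calculation(2) assms(3) unfolding xi_gt_def by blast
  ultimately show ?thesis
    using chain_offset_ge[OF assms(1)] by metis
qed

lemma chain_offset_separated:
  assumes "finite \<Phi>" "well_behaved verts cell \<Phi>" "\<phi> \<in> \<Phi>" "\<psi> \<in> \<Phi>" "\<phi> \<noteq> \<psi>"
    and "xi verts (cell \<phi>) \<inter> xi verts (cell \<psi>) \<noteq> {}"
  shows "chain_offset verts cell \<Phi> w \<phi> + w \<phi> \<le> chain_offset verts cell \<Phi> w \<psi> \<or>
         chain_offset verts cell \<Phi> w \<psi> + w \<psi> \<le> chain_offset verts cell \<Phi> w \<phi>"
proof -
  have "xi_gt verts cell \<phi> \<psi> \<or> xi_gt verts cell \<psi> \<phi>"
    using assms(2-6) unfolding well_behaved_def xi_gt_def by blast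
  then show ?thesis
    using chain_offset_add_le[OF assms(1)] assms(3,4) by blast
qed

lemma disjoint_family_on_classes:
  assumes "partition_on P C" "\<forall>\<phi>\<in>\<Phi>. cell \<phi> \<in> C" "well_behaved verts cell \<Phi>"
    and "\<forall>\<phi>\<in>\<Phi>. \<forall>\<gamma>\<in>Z \<phi>. path \<gamma> \<in> cell \<phi>"
  shows "disjoint_family_on Z \<Phi>"
  unfolding disjoint_family_on_def
proof (intro ballI impI)
  fix \<phi> \<psi> assume "\<phi> \<in> \<Phi>" "\<psi> \<in> \<Phi>" "\<phi> \<noteq> \<psi>"
  then have "cell \<phi> \<inter> cell \<psi> = {}"
    using assms(1-3) unfolding partition_on_def disjoint_def well_behaved_def by metis
  then show "Z \<phi> \<inter> Z \<psi> = {}"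
    using assms(4) \<open>\<phi> \<in> \<Phi>\<close> \<open>\<psi> \<in> \<Phi>\<close> by blast
qed

lemma slice_UN_eq:
  assumes "\<forall>\<psi>\<in>\<Phi>. S \<psi> \<subseteq> Z \<psi> \<times> UNIV" "disjoint_family_on Z \<Phi>" "\<phi> \<in> \<Phi>" "g \<in> Z \<phi>"
  shows "{s. (g, s) \<in> (\<Union>\<psi>\<in>\<Phi>. S \<psi>)} = {s. (g, s) \<in> S \<phi>}"
proof -
  have "\<psi> = \<phi>" if "\<psi> \<in> \<Phi>" "(g, s) \<in> S \<psi>" for \<psi> s
  proof -
    have "g \<in> Z \<psi>"
      using assms(1) that by blast
    then show ?thesis
      using assms(2-4) that(1) unfolding disjoint_family_on_def by blast
  qed
  then show ?thesis
    using assms(3) by blast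
qed

lemma valid_schedule_UN:
  assumes "finite \<Phi>"
    and serial: "\<forall>\<phi>\<in>\<Phi>. serial_schedule E tau (S \<phi>)"
    and own: "\<forall>\<phi>\<in>\<Phi>. S \<phi> \<subseteq> Z \<phi> \<times> UNIV" and disj: "disjoint_family_on Z \<Phi>"
    and window: "\<forall>\<phi>\<in>\<Phi>. \<forall>(g, s)\<in>S \<phi>. lo \<phi> \<le> s \<and> s + E g \<le> hi \<phi>"
    and apart: "\<forall>\<phi>\<in>\<Phi>. \<forall>\<psi>\<in>\<Phi>. \<forall>g\<in>Z \<phi>. \<forall>g'\<in>Z \<psi>. \<phi> \<noteq> \<psi> \<longrightarrow>
       verts (path g) \<inter> verts (path g') \<noteq> {} \<longrightarrow> hi \<phi> \<le> lo \<psi> \<or> hi \<psi> \<le> lo \<phi>"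
    and E_pos: "\<forall>\<phi>\<in>\<Phi>. \<forall>g\<in>Z \<phi>. 0 < E g"
  shows "valid_schedule verts path E tau (\<Union>\<phi>\<in>\<Phi>. S \<phi>)"
proof -
  have mem: "\<exists>\<phi>\<in>\<Phi>. (g, s) \<in> S \<phi> \<and> g \<in> Z \<phi>" if "(g, s) \<in> (\<Union>\<phi>\<in>\<Phi>. S \<phi>)" for g s
    using that own by blast
  have "\<not> resource_conflict verts path E (\<Union>\<phi>\<in>\<Phi>. S \<phi>)"
  proof
    assume "resource_conflict verts path E (\<Union>\<phi>\<in>\<Phi>. S \<phi>)"
    then obtain g s g' s' where c: "(g, s) \<in> (\<Union>\<phi>\<in>\<Phi>. S \<phi>)" "(g', s') \<in> (\<Union>\<phi>\<in>\<Phi>. S \<phi>)"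
      "(g, s) \<noteq> (g', s')" "verts (path g) \<inter> verts (path g') \<noteq> {}" "s \<le> s'" "s' < s + E g"
      unfolding resource_conflict_def by blast
    obtain \<phi> \<psi> where \<phi>: "\<phi> \<in> \<Phi>" "(g, s) \<in> S \<phi>" "g \<in> Z \<phi>" and \<psi>: "\<psi> \<in> \<Phi>" "(g', s') \<in> S \<psi>" "g' \<in> Z \<psi>"
      using mem[OF c(1)] mem[OF c(2)] by blast
    show False
    proof (cases "\<phi> = \<psi>")
      case True
      then show False
        using serial \<phi> \<psi> c(3,5,6) unfolding serial_schedule_def by blast
    next
      case False
      then have "hi \<phi> \<le> lo \<psi> \<or> hi \<psi> \<le> lo \<phi>"
        using apart \<phi> \<psi> c(4) by blast
      moreover have "lo \<phi> \<le> s" "s + E g \<le> hi \<phi>" "lo \<psi> \<le> s'" "s' + E g' \<le> hi \<psi>"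
        using window \<phi>(1,2) \<psi>(1,2) by fastforce+
      moreover have "0 < E g'"
        using E_pos \<psi>(1,3) by blast
      ultimately show False
        using c(5,6) by linarith
    qed
  qed
  moreover have "\<not> minsep_violation E tau (\<Union>\<phi>\<in>\<Phi>. S \<phi>)"
  proof
    assume "minsep_violation E tau (\<Union>\<phi>\<in>\<Phi>. S \<phi>)"
    then obtain g s s' where v: "(g, s) \<in> (\<Union>\<phi>\<in>\<Phi>. S \<phi>)" "(g, s') \<in> (\<Union>\<phi>\<in>\<Phi>. S \<phi>)" "s < s'"
      "\<not> (\<exists>s''. (g, s'') \<in> (\<Union>\<phi>\<in>\<Phi>. S \<phi>) \<and> s < s'' \<and> s'' < s')" "s' - (s + E g) < tau g"
      unfolding minsep_violation_def by blast
    obtain \<phi> where \<phi>: "\<phi> \<in> \<Phi>" "g \<in> Z \<phi>"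
      using mem[OF v(1)] by blast
    then have "{s. (g, s) \<in> (\<Union>\<phi>\<in>\<Phi>. S \<phi>)} = {s. (g, s) \<in> S \<phi>}"
      using slice_UN_eq[OF own disj] by blast
    then have "(g, s) \<in> S \<phi>" "(g, s') \<in> S \<phi>"
      using v(1,2) by blast+
    moreover have "\<not> (\<exists>s''. (g, s'') \<in> S \<phi> \<and> s < s'' \<and> s'' < s')"
      using v(4) \<phi>(1) by blast
    ultimately have "minsep_violation E tau (S \<phi>)"
      using v(3,5) unfolding minsep_violation_def by blast
    then show False
      using serial \<phi>(1) by (simp add: serial_schedule_def)
  qed
  moreover have "finite (\<Union>\<phi>\<in>\<Phi>. S \<phi>)"
    using assms(1) serial by (simp add: serial_schedule_def)
  ultimately show ?thesis
    by (simp add: valid_schedule_def)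
qed

theorem mainTheorem6:
  fixes verts :: "'p \<Rightarrow> 'v set"
    and P :: "'p set" and Pi :: "'p set set"
    and \<Phi> :: "'c set" and cell :: "'c \<Rightarrow> 'p set" and Z :: "'c \<Rightarrow> 'g set"
    and path :: "'g \<Rightarrow> 'p" and E tau :: "'g \<Rightarrow> real" and M :: "'g \<Rightarrow> nat"
    and t0 :: real
  assumes "finite P"
    and "partition_on P Pi"
    and "finite \<Phi>"
    and "\<forall>\<phi>\<in>\<Phi>. cell \<phi> \<in> Pi"
    and "well_behaved verts cell \<Phi>"
    and "\<forall>\<phi>\<in>\<Phi>. finite (Z \<phi>)"
    and "\<forall>\<phi>\<in>\<Phi>. \<forall>\<gamma>\<in>Z \<phi>. path \<gamma> \<in> cell \<phi>"
    and "\<forall>\<gamma>\<in>(\<Union>\<phi>\<in>\<Phi>. Z \<phi>). E \<gamma> > 0 \<and> tau \<gamma> \<ge> 0 \<and> M \<gamma> \<ge> 1"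
  shows "\<exists>S. valid_schedule verts path E tau S \<and>
           S \<subseteq> (\<Union>\<phi>\<in>\<Phi>. Z \<phi>) \<times> UNIV \<and>
           (\<forall>\<gamma>\<in>(\<Union>\<phi>\<in>\<Phi>. Z \<phi>). card {s. (\<gamma>, s) \<in> S} = M \<gamma>) \<and>
           (\<forall>(\<gamma>, s)\<in>S. t0 \<le> s \<and> s + E \<gamma> \<le>
               t0 + Max {(\<Sum>\<theta>\<in>\<Theta>. R_set E tau M (Z \<theta>)) | \<Theta>. xi_chain verts cell \<Phi> \<Theta>})"
proof -
  define lo where "lo \<phi> = t0 + chain_offset verts cell \<Phi> (\<lambda>\<theta>. R_set E tau M (Z \<theta>)) \<phi>" for \<phi>
  define hi where "hi \<phi> = lo \<phi> + R_set E tau M (Z \<phi>)" for \<phi>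
  have "\<forall>\<phi>\<in>\<Phi>. \<exists>S. serial_schedule E tau S \<and> S \<subseteq> Z \<phi> \<times> UNIV \<and> (\<forall>g\<in>Z \<phi>. card {s. (g, s) \<in> S} = M g) \<and>
      (\<forall>(g, s)\<in>S. lo \<phi> \<le> s \<and> s + E g \<le> hi \<phi>)"
    using assms(6,8) unfolding hi_def by (fastforce intro!: serial_schedule_R_set)
  then obtain S where S: "\<forall>\<phi>\<in>\<Phi>. serial_schedule E tau (S \<phi>) \<and> S \<phi> \<subseteq> Z \<phi> \<times> UNIV \<and>
      (\<forall>g\<in>Z \<phi>. card {s. (g, s) \<in> S \<phi>} = M g) \<and> (\<forall>(g, s)\<in>S \<phi>. lo \<phi> \<le> s \<and> s + E g \<le> hi \<phi>)"
    by (rule bchoice[THEN exE])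
  have disj: "disjoint_family_on Z \<Phi>"
    using assms(2,4,5,7) by (rule disjoint_family_on_classes)
  have apart: "hi \<phi> \<le> lo \<psi> \<or> hi \<psi> \<le> lo \<phi>"
    if "\<phi> \<in> \<Phi>" "\<psi> \<in> \<Phi>" "\<phi> \<noteq> \<psi>" "g \<in> Z \<phi>" "g' \<in> Z \<psi>" "verts (path g) \<inter> verts (path g') \<noteq> {}"
    for \<phi> \<psi> g g'
  proof -
    have "xi verts (cell \<phi>) \<inter> xi verts (cell \<psi>) \<noteq> {}"
      using that assms(7) unfolding xi_def by blast
    then show ?thesis
      using chain_offset_separated[where w = "\<lambda>\<theta>. R_set E tau M (Z \<theta>)", OF assms(3,5) that(1-3)]
      unfolding hi_def lo_def by auto
  qed
  have "valid_schedule verts path E tau (\<Union>\<phi>\<in>\<Phi>. S \<phi>)"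
    by (rule valid_schedule_UN[where Z = Z and lo = lo and hi = hi]) (use S disj apart assms(3,8) in blast)+
  moreover have "t0 \<le> lo \<phi>" "hi \<phi> \<le> t0 + Max {(\<Sum>\<theta>\<in>\<Theta>. R_set E tau M (Z \<theta>)) | \<Theta>. xi_chain verts cell \<Phi> \<Theta>}"
    if "\<phi> \<in> \<Phi>" for \<phi>
    using chain_offset_add_le_Max[OF assms(3) that] chain_offset_nonneg[OF assms(3)]
    unfolding hi_def lo_def by auto
  moreover have "{s. (\<gamma>, s) \<in> (\<Union>\<phi>\<in>\<Phi>. S \<phi>)} = {s. (\<gamma>, s) \<in> S \<phi>}" if "\<phi> \<in> \<Phi>" "\<gamma> \<in> Z \<phi>" for \<phi> \<gamma>
    using S disj that by (intro slice_UN_eq) auto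
  ultimately show ?thesis
    using S by (intro exI[of _ "\<Union>\<phi>\<in>\<Phi>. S \<phi>"]) fastforce
qed

end
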